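(* Let $F\subseteq\{1,\dots,d\}$ and $\beta=\hat\beta(F)$. Let $\beta'\in\mathbb{R}^d$ have support $F'$, and let $s$ be a positive integer with $|F\cup F'|\le s$. Let $i$ be an index with $|\nabla Q(\beta)_i|=\|\nabla Q(\beta)\|_\infty$. Then $$|F'-F|\big(Q(\beta)-\min_\eta Q(\beta+\eta e_i)\big)\ge\frac{\rho_-(s)}{\rho_+(1)}\big(Q(\beta)-Q(\beta')\big).$$
   Context: Let $Q:\mathbb{R}^d\to\mathbb{R}$ be convex and continuously differentiable. $e_j$ is the $j$-th standard basis vector, $\mathrm{supp}(\beta)=\{j:\beta_j\ne0\}$, $\|\beta\|_0=|\mathrm{supp}(\beta)|$, $A-B$ is set difference. For $F\subseteq\{1,\dots,d\}$, $\hat\beta(F)$ denotes a minimizer of $Q$ over $\{\beta:\mathrm{supp}(\beta)\subseteq F\}$ (assumed to exist). For a positive integer $s$, the restricted strong convexity constants $\rho_-(s),\rho_+(s)>0$ are constants such that for all $\beta,\beta'\in\mathbb{R}^d$ with $\|\beta'-\beta\|_0\le s$: $\frac{\rho_-(s)}{2}\|\beta'-\beta\|^2\le Q(\beta')-Q(\beta)-\langle\nabla Q(\beta),\beta'-\beta\rangle\le\frac{\rho_+(s)}{2}\|\beta'-\beta\|^2.$ *)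

theory Defs
  imports "HOL-Analysis.Analysis"
begin

text \<open>Support of a vector in R^d (index type 'n with CARD('n) = d).\<close>
definition supp :: "real ^ 'n \<Rightarrow> 'n set" where
  "supp \<beta> = {j. \<beta> $ j \<noteq> 0}"

definition cont_diff_grad :: "(real ^ 'n \<Rightarrow> real) \<Rightarrow> (real ^ 'n \<Rightarrow> real ^ 'n) \<Rightarrow> bool" where
  "cont_diff_grad Q G \<longleftrightarrow>
     (\<forall>\<beta>. (Q has_derivative (\<lambda>h. G \<beta> \<bullet> h)) (at \<beta>)) \<and> continuous_on UNIV G"

text \<open>beta is a minimizer of Q over vectors supported in F (i.e. beta = hat-beta(F)).\<close>
definition restricted_minimizer :: "(real ^ 'n \<Rightarrow> real) \<Rightarrow> 'n set \<Rightarrow> real ^ 'n \<Rightarrow> bool" where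
  "restricted_minimizer Q F \<beta> \<longleftrightarrow>
     supp \<beta> \<subseteq> F \<and> (\<forall>\<gamma>. supp \<gamma> \<subseteq> F \<longrightarrow> Q \<beta> \<le> Q \<gamma>)"

text \<open>Restricted strong convexity / smoothness at sparsity level s with constants rm = rho_-(s), rp = rho_+(s).\<close>
definition rsc :: "(real ^ 'n \<Rightarrow> real) \<Rightarrow> (real ^ 'n \<Rightarrow> real ^ 'n) \<Rightarrow> nat \<Rightarrow> real \<Rightarrow> real \<Rightarrow> bool" where
  "rsc Q G s rm rp \<longleftrightarrow> rm > 0 \<and> rp > 0 \<and>
     (\<forall>\<beta> \<beta>'. card (supp (\<beta>' - \<beta>)) \<le> s \<longrightarrow>
        rm / 2 * (norm (\<beta>' - \<beta>))\<^sup>2 \<le> Q \<beta>' - Q \<beta> - G \<beta> \<bullet> (\<beta>' - \<beta>) \<and>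
        Q \<beta>' - Q \<beta> - G \<beta> \<bullet> (\<beta>' - \<beta>) \<le> rp / 2 * (norm (\<beta>' - \<beta>))\<^sup>2)"

end

theory Submission
  imports Defs
begin

text \<open>Both bounds come from completing the square: with \<open>m = \<parallel>\<nabla>Q(\<beta>)\<parallel>\<^sub>\<infinity>\<close>, one exact
  coordinate step along the steepest coordinate gains at least \<open>m\<^sup>2 / (2 \<rho>\<^sub>+(1))\<close>, while
  restricted strong convexity, together with the vanishing of the gradient on \<open>F\<close>, caps the
  gain \<open>Q(\<beta>) - Q(\<beta>')\<close> by \<open>m\<^sup>2 / (2 \<rho>\<^sub>-(s))\<close> per coordinate of \<open>F' - F\<close>.\<close>

lemma quadratic_ge_neg_square:
  fixes a b t :: real
  assumes "a > 0"
  shows "a / 2 * t\<^sup>2 + b * t \<ge> - b\<^sup>2 / (2 * a)"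
proof -
  have "0 \<le> (a * t + b)\<^sup>2 / (2 * a)" using assms by simp
  also have "\<dots> = a / 2 * t\<^sup>2 + b * t + b\<^sup>2 / (2 * a)"
    using assms by (simp add: field_simps power2_eq_square)
  finally show ?thesis by linarith
qed

lemma quadratic_at_vertex:
  fixes a b :: real
  assumes "a > 0"
  shows "a / 2 * (- b / a)\<^sup>2 + b * (- b / a) = - b\<^sup>2 / (2 * a)"
  using assms by (simp add: field_simps power2_eq_square)

lemma card_supp_scaleR_axis_le_1: "card (supp (t *\<^sub>R axis j 1 :: real ^ 'n)) \<le> 1"
proof -
  have "supp (t *\<^sub>R axis j 1 :: real ^ 'n) \<subseteq> {j}"
    by (auto simp: supp_def axis_def)
  then have "card (supp (t *\<^sub>R axis j 1 :: real ^ 'n)) \<le> card {j}"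
    by (intro card_mono) simp_all
  then show ?thesis by simp
qed

lemma rsc_1_along_axis:
  assumes "rsc Q G 1 rm rp"
  shows "rm / 2 * t\<^sup>2 \<le> Q (b + t *\<^sub>R axis j 1) - Q b - t * G b $ j"
    and "Q (b + t *\<^sub>R axis j 1) - Q b - t * G b $ j \<le> rp / 2 * t\<^sup>2"
proof -
  let ?b' = "b + t *\<^sub>R axis j 1"
  have "card (supp (?b' - b)) \<le> 1"
    using card_supp_scaleR_axis_le_1 by simp
  then have bounds: "rm / 2 * (norm (?b' - b))\<^sup>2 \<le> Q ?b' - Q b - G b \<bullet> (?b' - b) \<and>
      Q ?b' - Q b - G b \<bullet> (?b' - b) \<le> rp / 2 * (norm (?b' - b))\<^sup>2"
    using assms unfolding rsc_def by blast
  have norm_eq: "(norm (?b' - b))\<^sup>2 = t\<^sup>2"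
    by (simp add: power2_abs)
  have inner_eq: "G b \<bullet> (?b' - b) = t * G b $ j"
    by (simp add: inner_axis)
  show "rm / 2 * t\<^sup>2 \<le> Q ?b' - Q b - t * G b $ j"
    and "Q ?b' - Q b - t * G b $ j \<le> rp / 2 * t\<^sup>2"
    using bounds unfolding norm_eq inner_eq by auto
qed

lemma restricted_minimizer_grad_eq_0:
  assumes "rsc Q G 1 rm rp" and "restricted_minimizer Q F \<beta>" and "j \<in> F"
  shows "G \<beta> $ j = 0"
proof -
  define t where "t = - G \<beta> $ j / rp"
  have rp: "rp > 0" using assms(1) by (simp add: rsc_def)
  have "supp (\<beta> + t *\<^sub>R axis j 1) \<subseteq> F"
    using assms(2,3) by (auto simp: restricted_minimizer_def supp_def axis_def)
  then have "Q \<beta> \<le> Q (\<beta> + t *\<^sub>R axis j 1)"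
    using assms(2) by (simp add: restricted_minimizer_def)
  then have "0 \<le> rp / 2 * t\<^sup>2 + G \<beta> $ j * t"
    using rsc_1_along_axis(2)[OF assms(1), of \<beta> t j] by (simp add: mult.commute)
  also have "\<dots> = - (G \<beta> $ j)\<^sup>2 / (2 * rp)"
    unfolding t_def using quadratic_at_vertex[OF rp] .
  finally show ?thesis
    using rp by (simp add: divide_le_0_iff)
qed

lemma coordinate_descent_gain:
  assumes "rsc Q G 1 rm rp"
  shows "(INF \<eta>. Q (\<beta> + \<eta> *\<^sub>R axis i 1)) \<le> Q \<beta> - (G \<beta> $ i)\<^sup>2 / (2 * rp)"
proof -
  have rm: "rm > 0" and rp: "rp > 0" using assms by (simp_all add: rsc_def)
  have "Q \<beta> - (G \<beta> $ i)\<^sup>2 / (2 * rm) \<le> Q (\<beta> + \<eta> *\<^sub>R axis i 1)" for \<eta>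
    using rsc_1_along_axis(1)[OF assms, of \<eta> \<beta> i] quadratic_ge_neg_square[OF rm, of "G \<beta> $ i" \<eta>]
    by (simp add: mult.commute)
  then have "bdd_below (range (\<lambda>\<eta>. Q (\<beta> + \<eta> *\<^sub>R axis i 1)))"
    by (rule bdd_belowI2)
  then have "(INF \<eta>. Q (\<beta> + \<eta> *\<^sub>R axis i 1)) \<le> Q (\<beta> + (- G \<beta> $ i / rp) *\<^sub>R axis i 1)"
    by (rule cINF_lower) simp
  also have "\<dots> \<le> Q \<beta> - (G \<beta> $ i)\<^sup>2 / (2 * rp)"
    using rsc_1_along_axis(2)[OF assms, of \<beta> "- G \<beta> $ i / rp" i] quadratic_at_vertex[OF rp, of "G \<beta> $ i"]
    by (simp add: mult.commute)
  finally show ?thesis .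
qed

text \<open>Only the coordinates in \<open>K\<close> contribute to \<open>\<langle>\<nabla>Q(\<beta>), \<beta>' - \<beta>\<rangle>\<close>; on each of them the
  linear term is traded against the quadratic one.\<close>

lemma rsc_gain_le_card:
  assumes "rsc Q G s rm rp" and "card (supp (\<beta>' - \<beta>)) \<le> s"
    and "\<And>j. j \<notin> K \<Longrightarrow> G \<beta> $ j * (\<beta>' - \<beta>) $ j = 0"
  shows "Q \<beta> - Q \<beta>' \<le> real (card K) * (infnorm (G \<beta>))\<^sup>2 / (2 * rm)"
proof -
  define g where "g = G \<beta>"
  define \<Delta> where "\<Delta> = \<beta>' - \<beta>"
  define m where "m = infnorm g"
  have rm: "rm > 0" using assms(1) by (simp add: rsc_def)
  have "g \<bullet> \<Delta> = (\<Sum>j\<in>UNIV. g $ j * \<Delta> $ j)"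
    by (simp add: inner_vec_def)
  also have "\<dots> = (\<Sum>j\<in>K. g $ j * \<Delta> $ j)"
    using assms(3) by (intro sum.mono_neutral_right) (auto simp: g_def \<Delta>_def)
  finally have inner_K: "g \<bullet> \<Delta> = (\<Sum>j\<in>K. g $ j * \<Delta> $ j)" .
  have "(\<Sum>j\<in>K. (\<Delta> $ j)\<^sup>2) \<le> (\<Sum>j\<in>UNIV. (\<Delta> $ j)\<^sup>2)"
    by (rule sum_mono2) auto
  also have "\<dots> = (norm \<Delta>)\<^sup>2"
    unfolding power2_norm_eq_inner by (simp add: inner_vec_def power2_eq_square)
  finally have norm_K: "(\<Sum>j\<in>K. (\<Delta> $ j)\<^sup>2) \<le> (norm \<Delta>)\<^sup>2" .
  have coordinate: "- (g $ j * \<Delta> $ j) - rm / 2 * (\<Delta> $ j)\<^sup>2 \<le> m\<^sup>2 / (2 * rm)" for j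
  proof -
    have "(g $ j)\<^sup>2 \<le> m\<^sup>2"
      unfolding m_def using component_le_infnorm_cart[of g j]
      by (metis abs_ge_zero power2_abs power_mono)
    then have "(g $ j)\<^sup>2 / (2 * rm) \<le> m\<^sup>2 / (2 * rm)"
      using rm by (simp add: divide_right_mono)
    with quadratic_ge_neg_square[OF rm, of "g $ j" "\<Delta> $ j"] show ?thesis
      by (simp add: mult.commute)
  qed
  have "rm / 2 * (norm \<Delta>)\<^sup>2 \<le> Q \<beta>' - Q \<beta> - g \<bullet> \<Delta>"
    using assms(1,2) unfolding rsc_def g_def \<Delta>_def by blast
  then have "Q \<beta> - Q \<beta>' \<le> - (g \<bullet> \<Delta>) - rm / 2 * (norm \<Delta>)\<^sup>2"
    by linarith
  also have "\<dots> \<le> - (g \<bullet> \<Delta>) - rm / 2 * (\<Sum>j\<in>K. (\<Delta> $ j)\<^sup>2)"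
    using norm_K rm by simp
  also have "\<dots> = (\<Sum>j\<in>K. - (g $ j * \<Delta> $ j) - rm / 2 * (\<Delta> $ j)\<^sup>2)"
    by (simp add: inner_K sum_subtractf sum_distrib_left sum_negf)
  also have "\<dots> \<le> (\<Sum>j\<in>K. m\<^sup>2 / (2 * rm))"
    by (rule sum_mono) (rule coordinate)
  finally show ?thesis
    by (simp add: m_def g_def)
qed

theorem mainTheorem14:
  fixes Q :: "real ^ 'n \<Rightarrow> real" and G :: "real ^ 'n \<Rightarrow> real ^ 'n"
    and rho_minus rho_plus :: "nat \<Rightarrow> real"
    and F :: "'n set" and \<beta> \<beta>' :: "real ^ 'n" and s :: nat and i :: 'n
  assumes convex: "convex_on UNIV Q"
    and diff: "cont_diff_grad Q G"
    and rsc_s: "rsc Q G s (rho_minus s) (rho_plus s)"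
    and rsc_1: "rsc Q G 1 (rho_minus 1) (rho_plus 1)"
    and min: "restricted_minimizer Q F \<beta>"
    and s_pos: "s > 0"
    and card_le: "card (F \<union> supp \<beta>') \<le> s"
    and i_max: "\<bar>G \<beta> $ i\<bar> = infnorm (G \<beta>)"
  shows "real (card (supp \<beta>' - F)) * (Q \<beta> - (INF \<eta>. Q (\<beta> + \<eta> *\<^sub>R axis i 1)))
           \<ge> rho_minus s / rho_plus 1 * (Q \<beta> - Q \<beta>')"
proof -
  define k where "k = real (card (supp \<beta>' - F))"
  define m where "m = infnorm (G \<beta>)"
  have rm: "rho_minus s > 0" and rp: "rho_plus 1 > 0"
    using rsc_s rsc_1 by (simp_all add: rsc_def)
  have supp_\<beta>: "supp \<beta> \<subseteq> F"
    using min by (simp add: restricted_minimizer_def)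
  have "card (supp (\<beta>' - \<beta>)) \<le> card (F \<union> supp \<beta>')"
    using supp_\<beta> by (intro card_mono) (auto simp: supp_def)
  then have card_diff: "card (supp (\<beta>' - \<beta>)) \<le> s"
    using card_le by linarith
  have outside: "G \<beta> $ j * (\<beta>' - \<beta>) $ j = 0" if "j \<notin> supp \<beta>' - F" for j
    using that supp_\<beta> restricted_minimizer_grad_eq_0[OF rsc_1 min] by (auto simp: supp_def)
  have "Q \<beta> - Q \<beta>' \<le> k * m\<^sup>2 / (2 * rho_minus s)"
    using rsc_gain_le_card[OF rsc_s card_diff outside] unfolding k_def m_def .
  then have "rho_minus s / rho_plus 1 * (Q \<beta> - Q \<beta>')
      \<le> rho_minus s / rho_plus 1 * (k * m\<^sup>2 / (2 * rho_minus s))"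
    using rm rp by (intro mult_left_mono) auto
  also have "\<dots> = k * (m\<^sup>2 / (2 * rho_plus 1))"
    using rm rp by (simp add: field_simps)
  also have "\<dots> \<le> k * (Q \<beta> - (INF \<eta>. Q (\<beta> + \<eta> *\<^sub>R axis i 1)))"
  proof -
    have "(G \<beta> $ i)\<^sup>2 = m\<^sup>2"
      using i_max unfolding m_def by (metis power2_abs)
    then show ?thesis
      using coordinate_descent_gain[OF rsc_1, of \<beta> i] unfolding k_def
      by (intro mult_left_mono) auto
  qed
  finally show ?thesis unfolding k_def .
qed

end
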